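(* Let $(X,d_X)$ be a compact geodesic metric space, $r\in X$, $d=d_X(r,\cdot)$, and let $(G,d_G)$ be either the metric Reeb graph of $d$ or the metric $\alpha$-Reeb graph of $d$, assumed to be a finite graph, with quotient map $\pi:X\to G$. Then $\pi$ is $1$-Lipschitz: for all $x,y\in X$, $d_G(\pi(x),\pi(y))\le d_X(x,y)$.
   Context: Reeb graph: for $x,y\in X$ set $x\sim y$ iff $d(x)=d(y)$ and $x,y$ lie in the same path-connected component of $d^{-1}(d(x))$; $G=X/\sim$, with quotient map $\pi:X\to G$. $\alpha$-Reeb graph: given $\alpha>0$ and a covering $\mathcal I=\{I_i\}$ of the range of $d$ by open intervals of length at most $\alpha$, let $\sim_\alpha$ be the transitive closure of the relation "$d(x)=d(y)$ and $x,y$ lie in the same path-connected component of $d^{-1}(I_i)$ for some $i$"; $G=X/\sim_\alpha$. In both cases $d$ induces $d_*:G\to\mathbb R_+$ with $d=d_*\circ\pi$. Metric structure (assuming $G$ is a finite topological graph): the vertex set $V$ consists of the points of degree $\neq 2$, the local maxima of $d_*$, and $\pi(r)$; the edges are the connected components of $G\setminus V$. Each edge is given length equal to the absolute difference of $d_*$ at its endpoints, the distance between two points $p,p'$ of the same edge being $|d_*(p)-d_*(p')|$; $d_G$ is the resulting metric-graph metric. *)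

theory Defs
  imports "HOL-Analysis.Analysis"
begin

text \<open>Compact geodesic metric space: a subset X of a metric space (with the induced metric),
  compact, in which any two points are joined by a geodesic, i.e. an isometric embedding
  of [0, dist x y] (parametrised here on [0,1] with constant speed).\<close>
definition geodesic_space :: "'a::metric_space set \<Rightarrow> bool" where
  "geodesic_space X \<longleftrightarrow>
     (\<forall>x\<in>X. \<forall>y\<in>X. \<exists>\<gamma>::real \<Rightarrow> 'a. \<gamma> 0 = x \<and> \<gamma> 1 = y \<and> \<gamma> ` {0..1} \<subseteq> X \<and>
        (\<forall>s\<in>{0..1}. \<forall>t\<in>{0..1}. dist (\<gamma> s) (\<gamma> t) = \<bar>s - t\<bar> * dist x y))"

definition reeb_rel :: "'a::metric_space set \<Rightarrow> ('a \<Rightarrow> real) \<Rightarrow> ('a \<times> 'a) set" where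
  "reeb_rel X d = {(x, y). x \<in> X \<and> y \<in> X \<and> d x = d y \<and>
                          path_component {z \<in> X. d z = d x} x y}"

definition alpha_cover :: "real \<Rightarrow> 'a set \<Rightarrow> ('a \<Rightarrow> real) \<Rightarrow> real set set \<Rightarrow> bool" where
  "alpha_cover \<alpha> X d \<I> \<longleftrightarrow>
     (\<forall>I\<in>\<I>. \<exists>a b. a < b \<and> I = {a<..<b} \<and> b - a \<le> \<alpha>) \<and> d ` X \<subseteq> \<Union>\<I>"

definition alpha_reeb_rel :: "'a::metric_space set \<Rightarrow> ('a \<Rightarrow> real) \<Rightarrow> real set set \<Rightarrow> ('a \<times> 'a) set" where
  "alpha_reeb_rel X d \<I> = ({(x, y). x \<in> X \<and> y \<in> X \<and> d x = d y \<and>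
        (\<exists>I\<in>\<I>. path_component {z \<in> X. d z \<in> I} x y)})\<^sup>+"

definition qmap :: "('a \<times> 'a) set \<Rightarrow> 'a \<Rightarrow> 'a set" where
  "qmap R x = R `` {x}"

definition quotient_top :: "'a::topological_space set \<Rightarrow> ('a \<times> 'a) set \<Rightarrow> 'a set topology" where
  "quotient_top X R = topology (\<lambda>U. U \<subseteq> X // R \<and> openin (top_of_set X) {x \<in> X. qmap R x \<in> U})"

definition dstar :: "'a set \<Rightarrow> ('a \<times> 'a) set \<Rightarrow> ('a \<Rightarrow> real) \<Rightarrow> 'a set \<Rightarrow> real" where
  "dstar X R d p = d (SOME x. x \<in> X \<and> qmap R x = p)"

definition finite_topological_graph :: "'b topology \<Rightarrow> bool" where
  "finite_topological_graph T \<longleftrightarrow> compact_space T \<and> Hausdorff_space T \<and>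
     (\<exists>W E. finite W \<and> W \<subseteq> topspace T \<and> finite E \<and> pairwise disjnt E \<and>
        \<Union>E = topspace T - W \<and>
        (\<forall>e\<in>E. openin T e \<and> subtopology T e homeomorphic_space top_of_set {0<..<(1::real)}))"

definition has_degree :: "'b topology \<Rightarrow> 'b \<Rightarrow> nat \<Rightarrow> bool" where
  "has_degree T p n \<longleftrightarrow>
     (\<exists>U0. openin T U0 \<and> p \<in> U0 \<and>
        (\<forall>U. openin T U \<and> p \<in> U \<and> U \<subseteq> U0 \<and> connectedin T U \<longrightarrow>
              card (connected_components_of (subtopology T (U - {p}))) = n \<and>
              finite (connected_components_of (subtopology T (U - {p})))))"

definition local_max_pt :: "'b topology \<Rightarrow> ('b \<Rightarrow> real) \<Rightarrow> 'b \<Rightarrow> bool" where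
  "local_max_pt T f p \<longleftrightarrow> p \<in> topspace T \<and>
     (\<exists>U. openin T U \<and> p \<in> U \<and> (\<forall>q\<in>U. f q \<le> f p))"

definition reeb_vertices :: "'a::metric_space set \<Rightarrow> ('a \<times> 'a) set \<Rightarrow> ('a \<Rightarrow> real) \<Rightarrow> 'a \<Rightarrow> 'a set set" where
  "reeb_vertices X R d r =
     {p \<in> X // R. \<not> has_degree (quotient_top X R) p 2}
     \<union> {p \<in> X // R. local_max_pt (quotient_top X R) (dstar X R d) p}
     \<union> {qmap R r}"

definition reeb_edges :: "'a::metric_space set \<Rightarrow> ('a \<times> 'a) set \<Rightarrow> ('a \<Rightarrow> real) \<Rightarrow> 'a \<Rightarrow> 'a set set set" where
  "reeb_edges X R d r =
     connected_components_of (subtopology (quotient_top X R) (X // R - reeb_vertices X R d r))"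

text \<open>Metric-graph metric: each edge carries the distance |d_*(p) - d_*(p')| (extended to
  its endpoints, i.e. its closure), and d_G is the induced path metric, i.e. the infimum
  over finite chains from p to q whose consecutive points lie on a common closed edge of
  the sum of these edge distances.\<close>
definition reeb_graph_dist :: "'a::metric_space set \<Rightarrow> ('a \<times> 'a) set \<Rightarrow> ('a \<Rightarrow> real) \<Rightarrow> 'a \<Rightarrow> 'a set \<Rightarrow> 'a set \<Rightarrow> real" where
  "reeb_graph_dist X R d r p q =
     Inf {(\<Sum>i<n. \<bar>dstar X R d (c i) - dstar X R d (c (Suc i))\<bar>) | c n.
            c 0 = p \<and> c n = q \<and>
            (\<forall>i<n. \<exists>e\<in>reeb_edges X R d r.
                c i \<in> (quotient_top X R) closure_of e \<and>
                c (Suc i) \<in> (quotient_top X R) closure_of e)}"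

end

theory Submission
  imports Defs
begin

text \<open>A geodesic \<gamma> from x to y is sent by \<pi> to a continuous path \<pi> \<circ> \<gamma> in the Reeb graph G.
  The vertex set of G is finite: on an open edge, two local maxima of d_* would enclose a
  local minimum, and since d = d(r, _) strictly decreases along geodesics towards r, the only
  local minimum of d_* is \<pi>(r). Hence every point of the path has a neighbourhood whose image
  shares a closed edge with it, and along a closed edge d_G is the difference of the values
  of d_*. As d is 1-Lipschitz, a continuous induction over [0,1] chains these pieces into an
  edge path from \<pi>(x) to \<pi>(y) of length at most d(x, y).\<close>

lemma local_max_pt_top_of_set:
  fixes h :: "'a::metric_space \<Rightarrow> real"
  shows "local_max_pt (top_of_set S) h a \<longleftrightarrow> a \<in> S \<and> (\<exists>\<epsilon>>0. \<forall>x\<in>S. dist x a < \<epsilon> \<longrightarrow> h x \<le> h a)"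
proof
  assume "local_max_pt (top_of_set S) h a"
  then obtain U where "openin (top_of_set S) U" "a \<in> U" "\<forall>q\<in>U. h q \<le> h a" "a \<in> S"
    unfolding local_max_pt_def by auto
  then show "a \<in> S \<and> (\<exists>\<epsilon>>0. \<forall>x\<in>S. dist x a < \<epsilon> \<longrightarrow> h x \<le> h a)"
    unfolding openin_euclidean_subtopology_iff by blast
next
  assume "a \<in> S \<and> (\<exists>\<epsilon>>0. \<forall>x\<in>S. dist x a < \<epsilon> \<longrightarrow> h x \<le> h a)"
  then obtain \<epsilon> where "a \<in> S" "\<epsilon> > 0" "\<forall>x\<in>S. dist x a < \<epsilon> \<longrightarrow> h x \<le> h a" by blast
  then show "local_max_pt (top_of_set S) h a"
    unfolding local_max_pt_def
    by (intro conjI exI[of _ "S \<inter> ball a \<epsilon>"]) (auto simp: openin_open_Int dist_commute)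
qed

lemma local_max_pt_homeomorphic_map:
  assumes f: "homeomorphic_map X Y f" and x: "x \<in> topspace X"
  shows "local_max_pt Y h (f x) \<longleftrightarrow> local_max_pt X (h \<circ> f) x"
proof
  assume "local_max_pt Y h (f x)"
  then obtain V where V: "openin Y V" "f x \<in> V" "\<forall>q\<in>V. h q \<le> h (f x)"
    unfolding local_max_pt_def by auto
  have "openin X {u \<in> topspace X. f u \<in> V}"
    using openin_continuous_map_preimage[OF homeomorphic_imp_continuous_map[OF f] V(1)] .
  then show "local_max_pt X (h \<circ> f) x"
    unfolding local_max_pt_def using V x by (intro conjI exI[of _ "{u \<in> topspace X. f u \<in> V}"]) auto
next
  assume "local_max_pt X (h \<circ> f) x"
  then obtain U where U: "openin X U" "x \<in> U" "\<forall>u\<in>U. h (f u) \<le> h (f x)"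
    unfolding local_max_pt_def by auto
  have "openin Y (f ` U)"
    using homeomorphic_map_openness_eq[OF f] U(1) openin_subset by blast
  moreover have "f x \<in> topspace Y"
    using f x homeomorphic_imp_surjective_map by blast
  ultimately show "local_max_pt Y h (f x)"
    unfolding local_max_pt_def using U by blast
qed

lemma local_max_pt_subtopology_open:
  assumes e: "openin T e" and p: "p \<in> e"
  shows "local_max_pt (subtopology T e) h p \<longleftrightarrow> local_max_pt T h p"
proof
  assume "local_max_pt (subtopology T e) h p"
  then obtain U where U: "openin (subtopology T e) U" "p \<in> U" "\<forall>q\<in>U. h q \<le> h p"
    unfolding local_max_pt_def by auto
  have "openin T U" using openin_trans_full[OF U(1) e] .
  then show "local_max_pt T h p"
    unfolding local_max_pt_def using U openin_subset by fastforce
next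
  assume "local_max_pt T h p"
  then obtain U where U: "openin T U" "p \<in> U" "\<forall>q\<in>U. h q \<le> h p"
    unfolding local_max_pt_def by auto
  have "openin (subtopology T e) (U \<inter> e)"
    using U(1) by (auto simp: openin_subtopology_Int)
  moreover have "p \<in> topspace (subtopology T e)"
    using e p openin_subset by fastforce
  ultimately show "local_max_pt (subtopology T e) h p"
    unfolding local_max_pt_def using U p by blast
qed

lemma local_max_pt_homeomorphic_open:
  assumes e: "openin T e" and f: "homeomorphic_map S (subtopology T e) f" and x: "x \<in> topspace S"
  shows "local_max_pt S (k \<circ> f) x \<longleftrightarrow> local_max_pt T k (f x)"
proof -
  have "f x \<in> e" using homeomorphic_imp_surjective_map[OF f] x by auto
  then show ?thesis
    using local_max_pt_homeomorphic_map[OF f x] local_max_pt_subtopology_open[OF e] by simp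
qed

lemma local_min_between_local_maxima:
  fixes h :: "real \<Rightarrow> real"
  assumes S: "is_interval S" and h: "continuous_on S h"
    and a: "local_max_pt (top_of_set S) h a" and b: "local_max_pt (top_of_set S) h b"
    and "a < b"
  shows "\<exists>c\<in>{a<..<b}. local_max_pt (top_of_set S) (\<lambda>x. - h x) c"
proof -
  obtain \<epsilon>a where "a \<in> S" "\<epsilon>a > 0" and \<epsilon>a: "\<And>x. x \<in> S \<Longrightarrow> dist x a < \<epsilon>a \<Longrightarrow> h x \<le> h a"
    using a by (auto simp: local_max_pt_top_of_set)
  obtain \<epsilon>b where "b \<in> S" "\<epsilon>b > 0" and \<epsilon>b: "\<And>x. x \<in> S \<Longrightarrow> dist x b < \<epsilon>b \<Longrightarrow> h x \<le> h b"
    using b by (auto simp: local_max_pt_top_of_set)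
  have ab: "{a..b} \<subseteq> S"
    using S \<open>a \<in> S\<close> \<open>b \<in> S\<close> unfolding is_interval_1 by (meson atLeastAtMost_iff subsetI)
  obtain m where m: "m \<in> {a..b}" "\<And>y. y \<in> {a..b} \<Longrightarrow> h m \<le> h y"
    using continuous_attains_inf[of "{a..b}" h] continuous_on_subset[OF h ab] \<open>a < b\<close> by auto
  \<comment> \<open>If the minimum sits at an endpoint, h is constant on a one-sided neighbourhood of it.\<close>
  obtain c where c: "c \<in> {a<..<b}" "h c \<le> h m"
  proof (cases "m = a \<or> m = b")
    case False
    then show ?thesis using m(1) that[of m] by auto
  next
    case True
    then show ?thesis
    proof
      assume "m = a"
      define c where "c = a + min \<epsilon>a (b - a) / 2"
      have "c \<in> {a<..<b}" "dist c a < \<epsilon>a"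
        using \<open>\<epsilon>a > 0\<close> \<open>a < b\<close> by (auto simp: c_def dist_real_def min_def field_simps)
      moreover from this have "h c \<le> h a" using ab by (intro \<epsilon>a) auto
      ultimately show ?thesis using that \<open>m = a\<close> by blast
    next
      assume "m = b"
      define c where "c = b - min \<epsilon>b (b - a) / 2"
      have "c \<in> {a<..<b}" "dist c b < \<epsilon>b"
        using \<open>\<epsilon>b > 0\<close> \<open>a < b\<close> by (auto simp: c_def dist_real_def min_def field_simps)
      moreover from this have "h c \<le> h b" using ab by (intro \<epsilon>b) auto
      ultimately show ?thesis using that \<open>m = b\<close> by blast
    qed
  qed
  have "local_max_pt (top_of_set S) (\<lambda>x. - h x) c"
    unfolding local_max_pt_top_of_set
  proof (intro conjI exI[of _ "min (c - a) (b - c)"] ballI impI)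
    show "c \<in> S" "0 < min (c - a) (b - c)" using c ab by auto
    fix x assume "dist x c < min (c - a) (b - c)"
    then have "x \<in> {a..b}" by (auto simp: dist_real_def)
    then show "- h x \<le> - h c" using m(2)[of x] c(2) by linarith
  qed
  then show ?thesis using c(1) by blast
qed

lemma finite_local_maxima_if_unique_local_min:
  fixes h :: "real \<Rightarrow> real"
  assumes S: "is_interval S" and h: "continuous_on S h"
    and unique: "\<And>c c'. local_max_pt (top_of_set S) (\<lambda>x. - h x) c \<Longrightarrow>
                       local_max_pt (top_of_set S) (\<lambda>x. - h x) c' \<Longrightarrow> c = c'"
  shows "finite {a. local_max_pt (top_of_set S) h a}" (is "finite ?M")
proof -
  have between: "\<exists>c\<in>{a<..<b}. local_max_pt (top_of_set S) (\<lambda>x. - h x) c"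
    if "a \<in> ?M" "b \<in> ?M" "a < b" for a b
    using local_min_between_local_maxima[OF S h] that by blast
  obtain c0 where straddle: "\<And>a b. a \<in> ?M \<Longrightarrow> b \<in> ?M \<Longrightarrow> a < b \<Longrightarrow> a < c0 \<and> c0 < b"
  proof (cases "\<exists>c. local_max_pt (top_of_set S) (\<lambda>x. - h x) c")
    case True
    then obtain c0 where c0: "local_max_pt (top_of_set S) (\<lambda>x. - h x) c0" by blast
    show ?thesis
    proof (rule that)
      fix a b assume "a \<in> ?M" "b \<in> ?M" "a < b"
      then obtain c where "c \<in> {a<..<b}" "local_max_pt (top_of_set S) (\<lambda>x. - h x) c"
        using between by blast
      moreover from this have "c = c0" using unique c0 by blast
      ultimately show "a < c0 \<and> c0 < b" by simp
    qed
  next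
    case False
    then show ?thesis using that between by blast
  qed
  have finite_subsingleton: "finite A" if "\<And>a b. a \<in> A \<Longrightarrow> b \<in> A \<Longrightarrow> a = b" for A :: "real set"
  proof (cases "A = {}")
    case False
    then obtain a where "a \<in> A" by blast
    then have "A \<subseteq> {a}" using that by blast
    then show ?thesis by (rule finite_subset) simp
  qed simp
  have "finite (?M \<inter> {..c0})"
  proof (rule finite_subsingleton)
    fix a b assume "a \<in> ?M \<inter> {..c0}" "b \<in> ?M \<inter> {..c0}"
    then show "a = b" using straddle[of a b] straddle[of b a] by (cases a b rule: linorder_cases) auto
  qed
  moreover have "finite (?M \<inter> {c0..})"
  proof (rule finite_subsingleton)
    fix a b assume "a \<in> ?M \<inter> {c0..}" "b \<in> ?M \<inter> {c0..}"
    then show "a = b" using straddle[of a b] straddle[of b a] by (cases a b rule: linorder_cases) auto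
  qed
  ultimately have "finite (?M \<inter> {..c0} \<union> ?M \<inter> {c0..})" by blast
  moreover have "?M = ?M \<inter> {..c0} \<union> ?M \<inter> {c0..}" by auto
  ultimately show ?thesis by simp
qed

lemma connected_components_of_eq_doubleton:
  assumes "connectedin Y A" "connectedin Y B" "openin Y A" "openin Y B"
    and "A \<inter> B = {}" "A \<noteq> {}" "B \<noteq> {}" "A \<union> B = topspace Y"
  shows "connected_components_of Y = {A, B}"
proof -
  have component: "connected_component_of_set Y x = C"
    if C: "connectedin Y C" "openin Y C" "closedin Y C" and "x \<in> C" for x C
  proof (rule connected_component_of_unique[OF \<open>x \<in> C\<close> C(1)])
    fix C' assume "x \<in> C' \<and> connectedin Y C'"
    then show "C' \<subseteq> C"
      using connectedin_clopen_cases[OF _ C(3,2), of C'] \<open>x \<in> C\<close> by (auto simp: disjnt_def)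
  qed
  have "A = topspace Y - B" "B = topspace Y - A" using assms(5,8) by auto
  then have "closedin Y A" "closedin Y B" using assms(3,4) by (metis closedin_diff closedin_topspace)+
  then have "connected_component_of_set Y x = A" if "x \<in> A" for x
    using component assms(1,3) that by blast
  moreover have "connected_component_of_set Y x = B" if "x \<in> B" for x
    using component assms(2,4) \<open>closedin Y B\<close> that by blast
  ultimately show ?thesis
    unfolding connected_components_of_def using assms(6-8) by blast
qed

lemma card_connected_components_of_homeomorphic_map:
  assumes "homeomorphic_map X Y f"
  shows "card (connected_components_of Y) = card (connected_components_of X)"
proof -
  have "inj_on f (\<Union>(connected_components_of X))"
    using homeomorphic_imp_injective_map[OF assms] by (simp add: Union_connected_components_of)
  then have "inj_on ((`) f) (connected_components_of X)" by (rule inj_on_image)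
  then show ?thesis
    by (simp add: homeomorphic_map_connected_components_of[OF assms] card_image)
qed

lemma card_connected_components_of_punctured_interval:
  fixes S :: "real set"
  assumes "open S" "connected S" "a \<in> S"
  shows "card (connected_components_of (top_of_set (S - {a}))) = 2"
proof -
  obtain \<epsilon> where "\<epsilon> > 0" "ball a \<epsilon> \<subseteq> S" using assms open_contains_ball by blast
  then have ne: "a - \<epsilon>/2 \<in> S \<inter> {..<a}" "a + \<epsilon>/2 \<in> S \<inter> {a<..}" by (auto simp: dist_real_def)
  have interval: "is_interval S" using assms(2) is_interval_connected_1 by blast
  have "connected_components_of (top_of_set (S - {a})) = {S \<inter> {..<a}, S \<inter> {a<..}}"
  proof (rule connected_components_of_eq_doubleton)
    have "connected (S \<inter> {..<a})" "connected (S \<inter> {a<..})"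
      using interval by (simp_all add: is_interval_connected_1[symmetric] is_interval_Int
          is_interval_ci is_interval_ic)
    then show "connectedin (top_of_set (S - {a})) (S \<inter> {..<a})"
      "connectedin (top_of_set (S - {a})) (S \<inter> {a<..})"
      by (auto simp: connectedin_subtopology)
    show "openin (top_of_set (S - {a})) (S \<inter> {..<a})"
      unfolding openin_open by (rule exI[of _ "{..<a}"]) auto
    show "openin (top_of_set (S - {a})) (S \<inter> {a<..})"
      unfolding openin_open by (rule exI[of _ "{a<..}"]) auto
    show "S \<inter> {..<a} \<inter> (S \<inter> {a<..}) = {}" by auto
    show "S \<inter> {..<a} \<noteq> {}" "S \<inter> {a<..} \<noteq> {}" using ne by blast+
    show "S \<inter> {..<a} \<union> S \<inter> {a<..} = topspace (top_of_set (S - {a}))" by auto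
  qed
  moreover have "S \<inter> {..<a} \<noteq> S \<inter> {a<..}"
    using ne(1) by (metis IntD2 greaterThan_iff lessThan_iff less_asym)
  ultimately show ?thesis by simp
qed

lemma has_degree_2_if_open_arc:
  assumes e: "openin T e" and f: "homeomorphic_map (subtopology T e) (top_of_set {0<..<1::real}) f"
    and p: "p \<in> e"
  shows "has_degree T p 2"
  unfolding has_degree_def
proof (intro exI[of _ e] conjI e p allI impI)
  fix U assume U: "openin T U \<and> p \<in> U \<and> U \<subseteq> e \<and> connectedin T U"
  have "e \<subseteq> topspace T" using e openin_subset by blast
  then have topspace_e: "topspace (subtopology T e) = e" by auto
  have "openin (subtopology T e) U" using U by (auto simp: openin_subtopology_alt)
  then have "openin (top_of_set {0<..<1}) (f ` U)"
    using homeomorphic_map_openness[OF f, of U] U topspace_e openin_subset by fastforce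
  then have "open (f ` U)" by (rule openin_open_trans) simp
  moreover have "connected (f ` U)"
    using connectedin_continuous_map_image[OF homeomorphic_imp_continuous_map[OF f], of U] U
    by (simp add: connectedin_subtopology)
  moreover have fU: "f ` U \<subseteq> {0<..<1}"
    using homeomorphic_imp_surjective_map[OF f] U topspace_e by auto
  ultimately have two: "card (connected_components_of (top_of_set (f ` U - {f p}))) = 2"
    using U by (intro card_connected_components_of_punctured_interval) auto
  have Ue: "e \<inter> (U - {p}) = U - {p}" using U by blast
  have "f ` (U - {p}) = f ` U - {f p}"
    using homeomorphic_imp_injective_map[OF f] U p topspace_e by (auto simp: inj_on_def)
  then have "homeomorphic_map (subtopology (subtopology T e) (U - {p}))
                (subtopology (top_of_set {0<..<1}) (f ` U - {f p})) f"
    using U topspace_e fU by (intro homeomorphic_map_subtopologies[OF f]) auto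
  moreover have "subtopology (subtopology T e) (U - {p}) = subtopology T (U - {p})"
    by (simp add: subtopology_subtopology Ue)
  moreover have "subtopology (top_of_set {0<..<1}) (f ` U - {f p}) = top_of_set (f ` U - {f p})"
    using fU by (simp add: subtopology_subtopology) (metis Diff_subset Int_absorb1 inf_commute order_trans)
  ultimately have "homeomorphic_map (subtopology T (U - {p})) (top_of_set (f ` U - {f p})) f"
    by simp
  then show "card (connected_components_of (subtopology T (U - {p}))) = 2"
    using card_connected_components_of_homeomorphic_map two by metis
  then show "finite (connected_components_of (subtopology T (U - {p})))"
    by (intro card_ge_0_finite) simp
qed

lemma real_interval_induction:
  fixes P :: "real \<Rightarrow> bool"
  assumes "a \<le> b" "P a"
    and local_step: "\<And>x. x \<in> {a..b} \<Longrightarrow> \<exists>\<delta>>0. \<forall>s\<in>{a..b}. \<forall>t\<in>{a..b}.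
                        x - \<delta> < s \<and> s \<le> x \<and> x \<le> t \<and> t < x + \<delta> \<and> P s \<longrightarrow> P t"
  shows "P b"
proof -
  define A where "A = {t \<in> {a..b}. P t}"
  have "a \<in> A" using assms(1,2) by (simp add: A_def)
  have A: "A \<noteq> {}" "bdd_above A" using \<open>a \<in> A\<close> by (auto simp: A_def intro: bdd_aboveI[of _ b])
  define T where "T = Sup A"
  have T: "T \<in> {a..b}"
    using cSup_upper[OF \<open>a \<in> A\<close> A(2)] cSup_least[OF A(1), of b] by (auto simp: T_def A_def)
  obtain \<delta> where "\<delta> > 0" and \<delta>: "\<And>s t. s \<in> {a..b} \<Longrightarrow> t \<in> {a..b} \<Longrightarrow>
      T - \<delta> < s \<Longrightarrow> s \<le> T \<Longrightarrow> T \<le> t \<Longrightarrow> t < T + \<delta> \<Longrightarrow> P s \<Longrightarrow> P t"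
    using local_step[OF T] by blast
  obtain s where "s \<in> A" "T - \<delta> < s"
    using less_cSupD[OF A(1), of "T - \<delta>"] \<open>\<delta> > 0\<close> by (auto simp: T_def)
  moreover have "s \<le> T" using cSup_upper[OF \<open>s \<in> A\<close> A(2)] by (simp add: T_def)
  ultimately have "P T" using \<delta>[of s T] T \<open>\<delta> > 0\<close> by (auto simp: A_def)
  have "T = b"
  proof (rule ccontr)
    assume "T \<noteq> b"
    define t where "t = min b (T + \<delta> / 2)"
    have "t \<in> {a..b}" "T < t" "t < T + \<delta>" using T \<open>T \<noteq> b\<close> \<open>\<delta> > 0\<close> by (auto simp: t_def)
    with \<open>P T\<close> have "t \<in> A" using \<delta>[of T t] T by (auto simp: A_def)
    then show False using cSup_upper[OF _ A(2), of t] \<open>T < t\<close> by (simp add: T_def)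
  qed
  then show ?thesis using \<open>P T\<close> by simp
qed

lemma openin_quotient_top:
  "openin (quotient_top X R) U \<longleftrightarrow> U \<subseteq> X // R \<and> openin (top_of_set X) {x \<in> X. qmap R x \<in> U}"
proof -
  have "istopology (\<lambda>U. U \<subseteq> X // R \<and> openin (top_of_set X) {x \<in> X. qmap R x \<in> U})"
    unfolding istopology_def
  proof (rule conjI; intro allI impI)
    fix S T assume "S \<subseteq> X // R \<and> openin (top_of_set X) {x \<in> X. qmap R x \<in> S}"
      "T \<subseteq> X // R \<and> openin (top_of_set X) {x \<in> X. qmap R x \<in> T}"
    moreover have "{x \<in> X. qmap R x \<in> S \<inter> T} = {x \<in> X. qmap R x \<in> S} \<inter> {x \<in> X. qmap R x \<in> T}"
      by auto
    ultimately show "S \<inter> T \<subseteq> X // R \<and> openin (top_of_set X) {x \<in> X. qmap R x \<in> S \<inter> T}"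
      by auto
  next
    fix K assume "\<forall>S\<in>K. S \<subseteq> X // R \<and> openin (top_of_set X) {x \<in> X. qmap R x \<in> S}"
    moreover have "{x \<in> X. qmap R x \<in> \<Union>K} = (\<Union>S\<in>K. {x \<in> X. qmap R x \<in> S})" by auto
    ultimately show "\<Union>K \<subseteq> X // R \<and> openin (top_of_set X) {x \<in> X. qmap R x \<in> \<Union>K}"
      by auto
  qed
  then show ?thesis unfolding quotient_top_def by simp
qed

lemma qmap_in_quotient: "x \<in> X \<Longrightarrow> qmap R x \<in> X // R"
  by (auto simp: qmap_def quotient_def)

lemma topspace_quotient_top: "topspace (quotient_top X R) = X // R"
proof -
  have "{x \<in> X. qmap R x \<in> X // R} = X" by (auto simp: qmap_in_quotient)
  then have "openin (quotient_top X R) (X // R)" by (simp add: openin_quotient_top)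
  then show ?thesis
    using openin_subset openin_quotient_top[of X R "topspace (quotient_top X R)"] by blast
qed

lemma continuous_map_qmap: "continuous_map (top_of_set X) (quotient_top X R) (qmap R)"
  by (auto simp: continuous_map topspace_quotient_top openin_quotient_top qmap_in_quotient)

lemma reeb_rel_refl: "x \<in> X \<Longrightarrow> (x, x) \<in> reeb_rel X d"
  by (auto simp: reeb_rel_def intro: path_component_refl)

lemma reeb_rel_level: "(x, y) \<in> reeb_rel X d \<Longrightarrow> d x = d y"
  by (simp add: reeb_rel_def)

lemma alpha_reeb_rel_refl:
  assumes "alpha_cover \<alpha> X d \<I>" "x \<in> X"
  shows "(x, x) \<in> alpha_reeb_rel X d \<I>"
proof -
  obtain I where "I \<in> \<I>" "d x \<in> I" using assms unfolding alpha_cover_def by blast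
  then have "path_component {z \<in> X. d z \<in> I} x x" using assms(2) by (auto intro: path_component_refl)
  then show ?thesis unfolding alpha_reeb_rel_def using \<open>I \<in> \<I>\<close> assms(2) by blast
qed

lemma alpha_reeb_rel_level: "(x, y) \<in> alpha_reeb_rel X d \<I> \<Longrightarrow> d x = d y"
  unfolding alpha_reeb_rel_def by (induction rule: trancl_induct) auto

lemma geodesic_space_closer_point:
  assumes "geodesic_space X" "z \<in> X" "r \<in> X" "z \<noteq> r" "\<epsilon> > 0"
  obtains w where "w \<in> X" "dist w z < \<epsilon>" "dist r w < dist r z"
proof -
  define D where "D = dist z r"
  obtain \<gamma> :: "real \<Rightarrow> 'a" where \<gamma>: "\<gamma> 0 = z" "\<gamma> 1 = r" "\<gamma> ` {0..1} \<subseteq> X"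
    and \<gamma>_dist: "\<And>s t. s \<in> {0..1} \<Longrightarrow> t \<in> {0..1} \<Longrightarrow> dist (\<gamma> s) (\<gamma> t) = \<bar>s - t\<bar> * D"
    using assms(1-3) unfolding geodesic_space_def D_def by metis
  have "D > 0" using assms(4) by (simp add: D_def)
  define t where "t = min (1/2) (\<epsilon> / (2 * D))"
  have t: "0 < t" "t \<le> 1/2" "t \<le> \<epsilon> / (2 * D)"
    using \<open>\<epsilon> > 0\<close> \<open>D > 0\<close> by (simp_all add: t_def)
  then have "t \<in> {0..1}" by simp
  have "t * D \<le> \<epsilon> / (2 * D) * D"
    using \<open>D > 0\<close> by (intro mult_right_mono[OF t(3)]) simp
  also have "\<dots> = \<epsilon> / 2" using \<open>D > 0\<close> by simp
  finally have "dist (\<gamma> t) z < \<epsilon>"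
    using \<gamma>(1) \<gamma>_dist[OF \<open>t \<in> {0..1}\<close>, of 0] t(1) \<open>\<epsilon> > 0\<close> by simp
  moreover have "dist r (\<gamma> t) < dist r z"
    using \<gamma>(2) \<gamma>_dist[OF \<open>t \<in> {0..1}\<close>, of 1] t(1,2) \<open>D > 0\<close>
    by (simp add: D_def dist_commute abs_if)
  ultimately show ?thesis using that \<gamma>(3) \<open>t \<in> {0..1}\<close> by blast
qed

locale metric_reeb_graph =
  fixes X :: "'a::metric_space set" and R :: "('a \<times> 'a) set" and d :: "'a \<Rightarrow> real" and r :: 'a
  assumes R_refl: "\<And>x. x \<in> X \<Longrightarrow> (x, x) \<in> R"
    and R_level: "\<And>x y. (x, y) \<in> R \<Longrightarrow> d x = d y"
    and geodesic: "geodesic_space X"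
    and root: "r \<in> X"
    and d_eq: "d = (\<lambda>x. dist r x)"
    and graph: "finite_topological_graph (quotient_top X R)"
begin

abbreviation "G \<equiv> quotient_top X R"
abbreviation "ds \<equiv> dstar X R d"

lemma dstar_qmap:
  assumes "x \<in> X" shows "ds (qmap R x) = d x"
proof -
  define z where "z = (SOME z. z \<in> X \<and> qmap R z = qmap R x)"
  have "z \<in> X" "qmap R z = qmap R x"
    using someI_ex[of "\<lambda>z. z \<in> X \<and> qmap R z = qmap R x"] assms unfolding z_def by blast+
  then have "(x, z) \<in> R" using R_refl by (auto simp: qmap_def)
  then show ?thesis unfolding dstar_def z_def[symmetric] using R_level by simp
qed

lemma continuous_map_dstar: "continuous_map G euclideanreal ds"
  unfolding continuous_map topspace_quotient_top
proof (intro conjI allI impI)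
  show "ds ` (X // R) \<subseteq> topspace euclideanreal" by simp
  fix V :: "real set" assume "openin euclideanreal V"
  have "continuous_on X d" unfolding d_eq by (intro continuous_intros)
  then have "openin (top_of_set X) (X \<inter> d -` V)"
    using \<open>openin euclideanreal V\<close> continuous_openin_preimage_gen by auto
  moreover have "{x \<in> X. qmap R x \<in> {p \<in> X // R. ds p \<in> V}} = X \<inter> d -` V"
    using dstar_qmap qmap_in_quotient by auto
  ultimately show "openin G {p \<in> X // R. ds p \<in> V}"
    unfolding openin_quotient_top by auto
qed

lemma local_min_dstar_imp_root:
  assumes "local_max_pt G (\<lambda>p. - ds p) q"
  shows "q = qmap R r"
proof (rule ccontr)
  assume "q \<noteq> qmap R r"
  obtain U where U: "openin G U" "q \<in> U" "\<And>u. u \<in> U \<Longrightarrow> ds q \<le> ds u"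
    using assms unfolding local_max_pt_def by auto
  have "q \<in> X // R" using U openin_quotient_top by blast
  then obtain z where "z \<in> X" "q = qmap R z" by (auto simp: quotient_def qmap_def)
  have "openin (top_of_set X) {x \<in> X. qmap R x \<in> U}" using U(1) openin_quotient_top by blast
  then obtain \<epsilon> where "\<epsilon> > 0" and \<epsilon>: "\<And>x. x \<in> X \<Longrightarrow> dist x z < \<epsilon> \<Longrightarrow> qmap R x \<in> U"
    using U(2) \<open>z \<in> X\<close> \<open>q = qmap R z\<close> unfolding openin_euclidean_subtopology_iff by blast
  obtain w where "w \<in> X" "dist w z < \<epsilon>" "dist r w < dist r z"
    using geodesic_space_closer_point[OF geodesic \<open>z \<in> X\<close> root _ \<open>\<epsilon> > 0\<close>]
      \<open>q \<noteq> qmap R r\<close> \<open>q = qmap R z\<close> by blast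
  then have "ds q \<le> ds (qmap R w)" by (intro U(3) \<epsilon>)
  then show False
    using \<open>dist r w < dist r z\<close> dstar_qmap \<open>w \<in> X\<close> \<open>z \<in> X\<close> \<open>q = qmap R z\<close> by (simp add: d_eq)
qed

lemma finite_local_max_dstar_in_edge:
  assumes e: "openin G e" and f: "homeomorphic_map (top_of_set {0<..<1::real}) (subtopology G e) f"
  shows "finite {p \<in> e. local_max_pt G ds p}"
proof -
  have f_onto: "f ` {0<..<1} = e"
    using homeomorphic_imp_surjective_map[OF f] openin_subset[OF e] by auto
  have lmax: "local_max_pt (top_of_set {0<..<1}) (k \<circ> f) c \<longleftrightarrow> local_max_pt G k (f c)"
    if "c \<in> {0<..<1}" for k c
    using local_max_pt_homeomorphic_open[OF e f] that by simp
  define h where "h = ds \<circ> f"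
  have "continuous_map (top_of_set {0<..<1}) euclideanreal h"
    unfolding h_def using continuous_map_compose[OF homeomorphic_imp_continuous_map[OF f]]
      continuous_map_from_subtopology[OF continuous_map_dstar] by blast
  then have "continuous_on {0<..<1} h" by simp
  moreover have "c = c'" if "local_max_pt (top_of_set {0<..<1}) (\<lambda>x. - h x) c"
    "local_max_pt (top_of_set {0<..<1}) (\<lambda>x. - h x) c'" for c c'
  proof -
    have "c \<in> {0<..<1}" "c' \<in> {0<..<1}" using that by (simp_all add: local_max_pt_def)
    moreover have "(\<lambda>x. - h x) = (\<lambda>p. - ds p) \<circ> f" by (simp add: h_def o_def)
    ultimately have "f c = qmap R r" "f c' = qmap R r"
      using that lmax local_min_dstar_imp_root by metis+
    then show ?thesis
      using \<open>c \<in> {0<..<1}\<close> \<open>c' \<in> {0<..<1}\<close> homeomorphic_imp_injective_map[OF f]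
      by (auto simp: inj_on_def)
  qed
  ultimately have "finite {c. local_max_pt (top_of_set {0<..<1}) h c}"
    by (intro finite_local_maxima_if_unique_local_min) (auto simp: is_interval_1)
  moreover have "{p \<in> e. local_max_pt G ds p} \<subseteq> f ` {c. local_max_pt (top_of_set {0<..<1}) h c}"
    using f_onto lmax[of _ ds] by (auto simp: h_def)
  ultimately show ?thesis using finite_subset by blast
qed

lemma finite_reeb_vertices: "finite (reeb_vertices X R d r)"
proof -
  obtain W E where W: "finite W" and E: "finite E" and WE: "\<Union>E = topspace G - W"
    and edge: "\<And>e. e \<in> E \<Longrightarrow> openin G e \<and> subtopology G e homeomorphic_space top_of_set {0<..<(1::real)}"
    using graph unfolding finite_topological_graph_def by metis
  have arc: "\<exists>f g. homeomorphic_map (subtopology G e) (top_of_set {0<..<1::real}) f \<and>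
      homeomorphic_map (top_of_set {0<..<1::real}) (subtopology G e) g" if "e \<in> E" for e
    using edge[OF that] homeomorphic_space_sym unfolding homeomorphic_space by metis
  have "reeb_vertices X R d r \<subseteq> W \<union> (\<Union>e\<in>E. {p \<in> e. local_max_pt G ds p}) \<union> {qmap R r}"
  proof
    fix p assume p: "p \<in> reeb_vertices X R d r"
    show "p \<in> W \<union> (\<Union>e\<in>E. {p \<in> e. local_max_pt G ds p}) \<union> {qmap R r}"
    proof (cases "p \<in> W \<or> p = qmap R r")
      case False
      have "p \<in> X // R" using p qmap_in_quotient[OF root] unfolding reeb_vertices_def by blast
      then have "p \<in> \<Union>E" using WE False unfolding topspace_quotient_top by blast
      then obtain e where e: "e \<in> E" "p \<in> e" by blast
      obtain f where "homeomorphic_map (subtopology G e) (top_of_set {0<..<1::real}) f"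
        using arc[OF e(1)] by blast
      then have "has_degree G p 2"
        using has_degree_2_if_open_arc[OF conjunct1[OF edge[OF e(1)]] _ e(2)] by blast
      then have "local_max_pt G ds p" using p False unfolding reeb_vertices_def by blast
      then show ?thesis using e by blast
    qed auto
  qed
  moreover have "finite {p \<in> e. local_max_pt G ds p}" if e: "e \<in> E" for e
  proof -
    obtain g where "homeomorphic_map (top_of_set {0<..<1::real}) (subtopology G e) g"
      using arc[OF e] by blast
    then show ?thesis using finite_local_max_dstar_in_edge edge[OF e] by blast
  qed
  then have "finite (W \<union> (\<Union>e\<in>E. {p \<in> e. local_max_pt G ds p}) \<union> {qmap R r})"
    using W E by simp
  ultimately show ?thesis by (rule finite_subset)
qed

lemma t1_space_reeb: "t1_space G"
  using graph by (simp add: finite_topological_graph_def Hausdorff_imp_t1_space)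

definition edge_adjacent :: "'a set \<Rightarrow> 'a set \<Rightarrow> bool" where
  "edge_adjacent p q \<longleftrightarrow> (\<exists>e\<in>reeb_edges X R d r. p \<in> G closure_of e \<and> q \<in> G closure_of e)"

lemma edge_adjacent_sym: "edge_adjacent p q \<Longrightarrow> edge_adjacent q p"
  unfolding edge_adjacent_def by blast

lemma edge_adjacent_if_in_closure:
  assumes C: "connectedin G C" "C \<inter> reeb_vertices X R d r = {}" and "q \<in> C" "p \<in> G closure_of C"
  shows "edge_adjacent q p"
proof -
  let ?Y = "subtopology G (X // R - reeb_vertices X R d r)"
  have "C \<subseteq> X // R - reeb_vertices X R d r"
    using connectedin_subset_topspace[OF C(1)] C(2) by (auto simp: topspace_quotient_top)
  then have "connectedin ?Y C" "q \<in> topspace ?Y"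
    using C(1) \<open>q \<in> C\<close> by (auto simp: connectedin_subtopology topspace_quotient_top)
  define e where "e = connected_component_of_set ?Y q"
  have "e \<in> reeb_edges X R d r"
    unfolding reeb_edges_def e_def connected_components_of_def using \<open>q \<in> topspace ?Y\<close> by (rule imageI)
  have "C \<subseteq> e"
    unfolding e_def using \<open>connectedin ?Y C\<close> \<open>q \<in> C\<close> by (rule connected_component_of_maximal)
  then have "G closure_of C \<subseteq> G closure_of e" by (rule closure_of_mono)
  moreover have "q \<in> G closure_of C"
    using \<open>q \<in> C\<close> closure_of_subset connectedin_subset_topspace[OF C(1)] by blast
  ultimately show ?thesis
    unfolding edge_adjacent_def using \<open>e \<in> reeb_edges X R d r\<close> \<open>p \<in> G closure_of C\<close> by blast
qed

text \<open>The first time u at which the path reaches g t bounds the vertex-free connected set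
  g ` {s..<u}, whose closure contains g t.\<close>
lemma edge_adjacent_path_ends:
  fixes g :: "real \<Rightarrow> 'a set"
  assumes g: "continuous_map (top_of_set {s..t}) G g" and "s < t"
    and no_vertex: "\<And>u. u \<in> {s..t} \<Longrightarrow> g u \<in> reeb_vertices X R d r \<Longrightarrow> g u = g t"
    and "g s \<noteq> g t"
  shows "edge_adjacent (g s) (g t)"
proof -
  define K where "K = {u \<in> {s..t}. g u = g t}"
  have "t \<in> topspace (top_of_set {s..t})" using \<open>s < t\<close> by simp
  then have "g t \<in> topspace G" using continuous_map_image_subset_topspace[OF g] by blast
  then have "closedin G {g t}" using t1_space_reeb by (simp add: t1_space_closedin_singleton)
  then have "closedin (top_of_set {s..t}) K"
    using closedin_continuous_map_preimage[OF g, of "{g t}"] by (simp add: K_def)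
  then have "closed K" by (rule closedin_closed_trans) simp
  moreover have "t \<in> K" "bdd_below K" using \<open>s < t\<close> by (auto simp: K_def intro: bdd_belowI[of _ s])
  ultimately have "Inf K \<in> K" using closed_contains_Inf by blast
  define u where "u = Inf K"
  have "u \<in> {s..t}" "g u = g t" using \<open>Inf K \<in> K\<close> by (simp_all add: u_def K_def)
  then have "s < u" using \<open>g s \<noteq> g t\<close> by (cases "u = s") auto
  define C where "C = g ` {s..<u}"
  have "connectedin (top_of_set {s..t}) {s..<u}"
    using \<open>u \<in> {s..t}\<close> by (auto simp: connectedin_subtopology)
  then have "connectedin G C"
    unfolding C_def by (rule connectedin_continuous_map_image[OF g])
  moreover have "C \<inter> reeb_vertices X R d r = {}"
  proof -
    have "False" if "v \<in> {s..<u}" "g v \<in> reeb_vertices X R d r" for v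
    proof -
      have "v \<in> K" using that no_vertex[of v] \<open>u \<in> {s..t}\<close> by (auto simp: K_def)
      then have "u \<le> v" unfolding u_def using \<open>bdd_below K\<close> by (rule cInf_lower)
      then show False using that by simp
    qed
    then show ?thesis unfolding C_def by blast
  qed
  moreover have "g s \<in> C" using \<open>s < u\<close> by (simp add: C_def)
  moreover have "g t \<in> G closure_of C"
  proof -
    have "{s..t} \<inter> {s..<u} = {s..<u}" using \<open>u \<in> {s..t}\<close> by auto
    then have "u \<in> top_of_set {s..t} closure_of {s..<u}"
      using \<open>s < u\<close> \<open>u \<in> {s..t}\<close> by (simp add: closure_of_subtopology)
    then show ?thesis
      using continuous_map_image_closure_subset[OF g, of "{s..<u}"] \<open>g u = g t\<close>
      unfolding C_def by blast
  qed
  ultimately show ?thesis by (rule edge_adjacent_if_in_closure)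
qed

lemma path_locally_avoids_other_vertices:
  fixes g :: "real \<Rightarrow> 'a set"
  assumes g: "continuous_map (top_of_set {a..b}) G g" and "\<tau> \<in> {a..b}"
  obtains \<delta> where "\<delta> > 0"
    "\<And>u. u \<in> {a..b} \<Longrightarrow> \<bar>u - \<tau>\<bar> < \<delta> \<Longrightarrow> g u \<in> reeb_vertices X R d r \<Longrightarrow> g u = g \<tau>"
proof -
  let ?V = "reeb_vertices X R d r - {g \<tau>}"
  have "?V \<subseteq> topspace G"
    using qmap_in_quotient[OF root] unfolding reeb_vertices_def topspace_quotient_top by blast
  moreover have "finite ?V" using finite_reeb_vertices by blast
  ultimately have "closedin G ?V"
    using t1_space_reeb unfolding t1_space_closedin_finite by blast
  then have "openin G (topspace G - ?V)" by (simp add: openin_diff)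
  then have "openin (top_of_set {a..b}) {u \<in> topspace (top_of_set {a..b}). g u \<in> topspace G - ?V}"
    by (rule openin_continuous_map_preimage[OF g])
  moreover have "{u \<in> topspace (top_of_set {a..b}). g u \<in> topspace G - ?V} = {u \<in> {a..b}. g u \<notin> ?V}"
    using continuous_map_image_subset_topspace[OF g] \<open>\<tau> \<in> {a..b}\<close> by auto
  ultimately have "openin (top_of_set {a..b}) {u \<in> {a..b}. g u \<notin> ?V}" by simp
  moreover have "\<tau> \<in> {u \<in> {a..b}. g u \<notin> ?V}" using \<open>\<tau> \<in> {a..b}\<close> by simp
  ultimately obtain \<delta> where "\<delta> > 0" and
    \<delta>: "\<forall>u\<in>{a..b}. dist u \<tau> < \<delta> \<longrightarrow> u \<in> {u \<in> {a..b}. g u \<notin> ?V}"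
    unfolding openin_euclidean_subtopology_iff by blast
  then show ?thesis using that by (auto simp: dist_real_def)
qed

lemma locally_edge_adjacent:
  fixes g :: "real \<Rightarrow> 'a set"
  assumes g: "continuous_map (top_of_set {a..b}) G g" and "\<tau> \<in> {a..b}"
  shows "\<exists>\<delta>>0. \<forall>s\<in>{a..b}. \<bar>s - \<tau>\<bar> < \<delta> \<longrightarrow> g s = g \<tau> \<or> edge_adjacent (g s) (g \<tau>)"
proof -
  obtain \<delta> where "\<delta> > 0" and near:
    "\<And>u. u \<in> {a..b} \<Longrightarrow> \<bar>u - \<tau>\<bar> < \<delta> \<Longrightarrow> g u \<in> reeb_vertices X R d r \<Longrightarrow> g u = g \<tau>"
    using path_locally_avoids_other_vertices[OF g \<open>\<tau> \<in> {a..b}\<close>] by blast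
  have "g s = g \<tau> \<or> edge_adjacent (g s) (g \<tau>)" if s: "s \<in> {a..b}" "\<bar>s - \<tau>\<bar> < \<delta>" for s
  proof (cases "g s = g \<tau>")
    case False
    consider "s < \<tau>" | "\<tau> < s" using False by fastforce
    then show ?thesis
    proof cases
      case 1
      have "continuous_map (top_of_set {s..\<tau>}) G g"
        using continuous_map_from_subtopology_mono[OF g] s \<open>\<tau> \<in> {a..b}\<close> by simp
      moreover have "g u = g \<tau>" if "u \<in> {s..\<tau>}" "g u \<in> reeb_vertices X R d r" for u
        using near[of u] that s \<open>\<tau> \<in> {a..b}\<close> by auto
      ultimately show ?thesis using edge_adjacent_path_ends[OF _ 1 _ False] by blast
    next
      case 2
      \<comment> \<open>Reverse the path so that it ends at g \<tau>.\<close>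
      have "continuous_map (top_of_set {-s..-\<tau>}) (top_of_set {\<tau>..s}) uminus"
        by (auto intro: continuous_intros)
      moreover have "continuous_map (top_of_set {\<tau>..s}) G g"
        using continuous_map_from_subtopology_mono[OF g] s \<open>\<tau> \<in> {a..b}\<close> by simp
      ultimately have "continuous_map (top_of_set {-s..-\<tau>}) G (g \<circ> uminus)"
        by (rule continuous_map_compose)
      moreover have "- s < - \<tau>" using 2 by simp
      moreover have "(g \<circ> uminus) u = (g \<circ> uminus) (- \<tau>)"
        if "u \<in> {-s..-\<tau>}" "(g \<circ> uminus) u \<in> reeb_vertices X R d r" for u
        using near[of "- u"] that s \<open>\<tau> \<in> {a..b}\<close> by auto
      moreover have "(g \<circ> uminus) (- s) \<noteq> (g \<circ> uminus) (- \<tau>)" using False by simp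
      ultimately have "edge_adjacent ((g \<circ> uminus) (- s)) ((g \<circ> uminus) (- \<tau>))"
        by (rule edge_adjacent_path_ends)
      then show ?thesis by simp
    qed
  qed simp
  then show ?thesis using \<open>\<delta> > 0\<close> by blast
qed

definition edge_path_le :: "'a set \<Rightarrow> 'a set \<Rightarrow> real \<Rightarrow> bool" where
  "edge_path_le p q L \<longleftrightarrow> (\<exists>c n. c 0 = p \<and> c n = q \<and> (\<forall>i<n. edge_adjacent (c i) (c (Suc i))) \<and>
      (\<Sum>i<n. \<bar>ds (c i) - ds (c (Suc i))\<bar>) \<le> L)"

lemma edge_path_le_refl: "0 \<le> L \<Longrightarrow> edge_path_le p p L"
  unfolding edge_path_le_def by (intro exI[of _ "\<lambda>_. p"] exI[of _ 0]) simp

lemma edge_path_le_mono: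
  assumes "edge_path_le p q L" "L \<le> L'"
  shows "edge_path_le p q L'"
proof -
  obtain c n where "c 0 = p" "c n = q" "\<forall>i<n. edge_adjacent (c i) (c (Suc i))"
    "(\<Sum>i<n. \<bar>ds (c i) - ds (c (Suc i))\<bar>) \<le> L"
    using assms(1) unfolding edge_path_le_def by blast
  then show ?thesis
    unfolding edge_path_le_def using assms(2) by (intro exI[of _ c] exI[of _ n]) auto
qed

lemma edge_path_le_snoc:
  assumes "edge_path_le p q L" "edge_adjacent q q'"
  shows "edge_path_le p q' (L + \<bar>ds q - ds q'\<bar>)"
proof -
  obtain c n where c: "c 0 = p" "c n = q" "\<forall>i<n. edge_adjacent (c i) (c (Suc i))"
    "(\<Sum>i<n. \<bar>ds (c i) - ds (c (Suc i))\<bar>) \<le> L"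
    using assms(1) unfolding edge_path_le_def by blast
  define c' where "c' = c(Suc n := q')"
  have "\<forall>i<Suc n. edge_adjacent (c' i) (c' (Suc i))"
    using c(2,3) assms(2) by (auto simp: c'_def less_Suc_eq)
  moreover have "(\<Sum>i<Suc n. \<bar>ds (c' i) - ds (c' (Suc i))\<bar>) \<le> L + \<bar>ds q - ds q'\<bar>"
    using c(2,4) by (simp add: c'_def)
  ultimately show ?thesis
    unfolding edge_path_le_def using c(1) by (intro exI[of _ c'] exI[of _ "Suc n"]) (simp add: c'_def)
qed

lemma reeb_graph_dist_le: "edge_path_le p q L \<Longrightarrow> reeb_graph_dist X R d r p q \<le> L"
  unfolding edge_path_le_def reeb_graph_dist_def edge_adjacent_def
  by (elim exE conjE, rule cInf_lower2) (auto intro: bdd_belowI[of _ 0] sum_nonneg)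

lemma edge_path_le_along_path:
  fixes g :: "real \<Rightarrow> 'a set"
  assumes g: "continuous_map (top_of_set {a..b}) G g" and "a \<le> b" "0 \<le> D"
    and cost: "\<And>s t. s \<in> {a..b} \<Longrightarrow> t \<in> {a..b} \<Longrightarrow> s \<le> t \<Longrightarrow> \<bar>ds (g s) - ds (g t)\<bar> \<le> (t - s) * D"
  shows "edge_path_le (g a) (g b) ((b - a) * D)"
proof -
  let ?P = "\<lambda>t. edge_path_le (g a) (g t) ((t - a) * D)"
  have step: "?P t" if "?P s" "s \<in> {a..b}" "t \<in> {a..b}" "s \<le> t"
    and "g t = g s \<or> edge_adjacent (g s) (g t)" for s t
  proof -
    have "(s - a) * D \<le> (t - a) * D" using \<open>s \<le> t\<close> \<open>0 \<le> D\<close> by (simp add: mult_right_mono)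
    moreover have "?P t" if "edge_adjacent (g s) (g t)"
    proof -
      have "edge_path_le (g a) (g t) ((s - a) * D + \<bar>ds (g s) - ds (g t)\<bar>)"
        using edge_path_le_snoc[OF \<open>?P s\<close> that] .
      moreover have "(s - a) * D + \<bar>ds (g s) - ds (g t)\<bar> \<le> (t - a) * D"
        using cost[OF \<open>s \<in> {a..b}\<close> \<open>t \<in> {a..b}\<close> \<open>s \<le> t\<close>] by (simp add: algebra_simps)
      ultimately show ?thesis by (rule edge_path_le_mono)
    qed
    ultimately show ?thesis
      using \<open>g t = g s \<or> edge_adjacent (g s) (g t)\<close> \<open>?P s\<close> edge_path_le_mono by auto
  qed
  show ?thesis
  proof (rule real_interval_induction[where P = ?P])
    show "?P a" by (simp add: edge_path_le_refl)
    fix \<tau> :: real assume "\<tau> \<in> {a..b}"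
    then obtain \<delta> where "\<delta> > 0"
      and \<delta>: "\<And>s. s \<in> {a..b} \<Longrightarrow> \<bar>s - \<tau>\<bar> < \<delta> \<Longrightarrow> g s = g \<tau> \<or> edge_adjacent (g s) (g \<tau>)"
      using locally_edge_adjacent[OF g] by blast
    \<comment> \<open>Pass through \<tau>: both g s and g t are attached to g \<tau>.\<close>
    have "?P t" if "s \<in> {a..b}" "t \<in> {a..b}" "\<tau> - \<delta> < s" "s \<le> \<tau>" "\<tau> \<le> t" "t < \<tau> + \<delta>" "?P s"
      for s t
    proof -
      have "?P \<tau>"
        using step[OF \<open>?P s\<close> \<open>s \<in> {a..b}\<close> \<open>\<tau> \<in> {a..b}\<close> \<open>s \<le> \<tau>\<close>] \<delta>[OF \<open>s \<in> {a..b}\<close>] that by auto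
      then show ?thesis
        using step[OF _ \<open>\<tau> \<in> {a..b}\<close> \<open>t \<in> {a..b}\<close> \<open>\<tau> \<le> t\<close>] \<delta>[OF \<open>t \<in> {a..b}\<close>] that
        by (auto dest: edge_adjacent_sym)
    qed
    then show "\<exists>\<delta>>0. \<forall>s\<in>{a..b}. \<forall>t\<in>{a..b}. \<tau> - \<delta> < s \<and> s \<le> \<tau> \<and> \<tau> \<le> t \<and> t < \<tau> + \<delta> \<and>
                 ?P s \<longrightarrow> ?P t"
      using \<open>\<delta> > 0\<close> by blast
  qed (use \<open>a \<le> b\<close> in simp)
qed

lemma reeb_graph_dist_qmap_le:
  assumes "x \<in> X" "y \<in> X"
  shows "reeb_graph_dist X R d r (qmap R x) (qmap R y) \<le> dist x y"
proof -
  define D where "D = dist x y"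
  obtain \<gamma> :: "real \<Rightarrow> 'a" where \<gamma>: "\<gamma> 0 = x" "\<gamma> 1 = y" "\<gamma> ` {0..1} \<subseteq> X"
    and \<gamma>_dist: "\<And>s t. s \<in> {0..1} \<Longrightarrow> t \<in> {0..1} \<Longrightarrow> dist (\<gamma> s) (\<gamma> t) = \<bar>s - t\<bar> * D"
    using geodesic assms unfolding geodesic_space_def D_def by metis
  have "D-lipschitz_on {0..1} \<gamma>"
    by (rule lipschitz_onI) (simp_all add: \<gamma>_dist dist_real_def D_def mult.commute)
  then have "continuous_on {0..1} \<gamma>" by (rule lipschitz_on_continuous_on)
  define g where "g = qmap R \<circ> \<gamma>"
  have "continuous_map (top_of_set {0..1}) G g"
    unfolding g_def
    by (rule continuous_map_compose[OF _ continuous_map_qmap])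
      (use \<open>continuous_on {0..1} \<gamma>\<close> \<gamma>(3) in auto)
  moreover have "\<bar>ds (g s) - ds (g t)\<bar> \<le> (t - s) * D"
    if "s \<in> {0..1}" "t \<in> {0..1}" "s \<le> t" for s t
  proof -
    have "\<gamma> s \<in> X" "\<gamma> t \<in> X" using that \<gamma>(3) by auto
    then have "\<bar>ds (g s) - ds (g t)\<bar> = \<bar>dist (\<gamma> s) r - dist r (\<gamma> t)\<bar>"
      by (simp add: g_def dstar_qmap) (simp add: d_eq dist_commute)
    also have "\<dots> \<le> dist (\<gamma> s) (\<gamma> t)" by (rule abs_dist_diff_le)
    also have "\<dots> = (t - s) * D" using \<gamma>_dist that by simp
    finally show ?thesis .
  qed
  ultimately have "edge_path_le (g 0) (g 1) ((1 - 0) * D)"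
    by (intro edge_path_le_along_path) (simp_all add: D_def)
  then show ?thesis
    using reeb_graph_dist_le \<gamma>(1,2) by (simp add: g_def D_def)
qed

end

theorem lemma5:
  fixes X :: "'a::metric_space set" and r :: 'a and d :: "'a \<Rightarrow> real"
    and R :: "('a \<times> 'a) set" and \<alpha> :: real and \<I> :: "real set set"
  assumes "compact X" and "geodesic_space X" and "r \<in> X"
    and "d = (\<lambda>x. dist r x)"
    and "R = reeb_rel X d \<or> (\<alpha> > 0 \<and> alpha_cover \<alpha> X d \<I> \<and> R = alpha_reeb_rel X d \<I>)"
    and "finite_topological_graph (quotient_top X R)"
    and "x \<in> X" and "y \<in> X"
  shows "reeb_graph_dist X R d r (qmap R x) (qmap R y) \<le> dist x y"
proof -
  have "(\<forall>x\<in>X. (x, x) \<in> R) \<and> (\<forall>x y. (x, y) \<in> R \<longrightarrow> d x = d y)"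
    using assms(5)
  proof
    assume "R = reeb_rel X d"
    then show ?thesis using reeb_rel_refl reeb_rel_level by blast
  next
    assume "\<alpha> > 0 \<and> alpha_cover \<alpha> X d \<I> \<and> R = alpha_reeb_rel X d \<I>"
    then show ?thesis using alpha_reeb_rel_refl alpha_reeb_rel_level by blast
  qed
  then interpret metric_reeb_graph X R d r
    using assms(2,3,4,6) by unfold_locales auto
  show ?thesis using assms(7,8) by (rule reeb_graph_dist_qmap_le)
qed

end
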